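(* Let $X$ be a separable symmetric space on $[0,1]$. Then the following are equivalent: (a) for every $f\in X$ with $\int_0^1f(t)\,dt\ne0$ there exists $\lambda_0\in\mathbb{R}$ with $\|1-\lambda_0f\|_X<1$; (b) $X$ is smooth at the function identically equal to $1$.
   Context: A symmetric space $X$ on $[0,1]$ is a Banach space of (equivalence classes of) real-valued Lebesgue measurable functions on $[0,1]$ such that: (a) if $y\in X$ and $x$ is measurable with $|x|\le|y|$ a.e., then $x\in X$ and $\|x\|_X\le\|y\|_X$; (b) if $x,y$ are equimeasurable and $y\in X$, then $x\in X$ and $\|x\|_X=\|y\|_X$; normalized so that $\|\chi_{[0,1]}\|_X=1$. A Banach space $E$ is smooth at $x_0\in E$ with $\|x_0\|_E=1$ if there is a unique $x^*\in E^*$ with $\|x^*\|_{E^*}=x^*(x_0)=1$. *)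

theory Defs
  imports "HOL-Analysis.Analysis"
begin

text \<open>Functions on [0,1] are represented by functions real => real; only their
values on [0,1] (up to Lebesgue-null sets) matter.\<close>

abbreviation M01 :: "real measure" where "M01 \<equiv> lebesgue_on {0..1}"

definition equimeasurable :: "(real \<Rightarrow> real) \<Rightarrow> (real \<Rightarrow> real) \<Rightarrow> bool" where
  "equimeasurable x y \<longleftrightarrow>
     (\<forall>s::real. emeasure M01 {t \<in> space M01. x t > s} = emeasure M01 {t \<in> space M01. y t > s})"

definition symmetric_space :: "(real \<Rightarrow> real) set \<Rightarrow> ((real \<Rightarrow> real) \<Rightarrow> real) \<Rightarrow> bool" where
  "symmetric_space X N \<longleftrightarrow>
     \<comment> \<open>elements are Lebesgue measurable on [0,1]\<close>
     X \<subseteq> borel_measurable M01 \<and>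
     \<comment> \<open>linear space\<close>
     (\<lambda>_. 0) \<in> X \<and>
     (\<forall>x\<in>X. \<forall>y\<in>X. (\<lambda>t. x t + y t) \<in> X) \<and>
     (\<forall>x\<in>X. \<forall>c::real. (\<lambda>t. c * x t) \<in> X) \<and>
     \<comment> \<open>norm (on equivalence classes modulo a.e. equality)\<close>
     (\<forall>x\<in>X. N x \<ge> 0) \<and>
     (\<forall>x\<in>X. N x = 0 \<longleftrightarrow> (AE t in M01. x t = 0)) \<and>
     (\<forall>x\<in>X. \<forall>c::real. N (\<lambda>t. c * x t) = \<bar>c\<bar> * N x) \<and>
     (\<forall>x\<in>X. \<forall>y\<in>X. N (\<lambda>t. x t + y t) \<le> N x + N y) \<and>
     \<comment> \<open>completeness (Banach space)\<close>
     (\<forall>u::nat \<Rightarrow> real \<Rightarrow> real. (\<forall>n. u n \<in> X) \<and>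
        (\<forall>e>0. \<exists>K. \<forall>m\<ge>K. \<forall>n\<ge>K. N (\<lambda>t. u m t - u n t) < e) \<longrightarrow>
        (\<exists>x\<in>X. (\<lambda>n. N (\<lambda>t. u n t - x t)) \<longlonglongrightarrow> 0)) \<and>
     \<comment> \<open>(a) ideal property\<close>
     (\<forall>x y. y \<in> X \<and> x \<in> borel_measurable M01 \<and> (AE t in M01. \<bar>x t\<bar> \<le> \<bar>y t\<bar>)
        \<longrightarrow> x \<in> X \<and> N x \<le> N y) \<and>
     \<comment> \<open>(b) rearrangement invariance\<close>
     (\<forall>x y. y \<in> X \<and> x \<in> borel_measurable M01 \<and> equimeasurable x y
        \<longrightarrow> x \<in> X \<and> N x = N y) \<and>
     \<comment> \<open>normalisation: the characteristic function of [0,1]\<close>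
     (\<lambda>_. 1) \<in> X \<and> N (\<lambda>_. 1) = 1"

definition separable_space :: "(real \<Rightarrow> real) set \<Rightarrow> ((real \<Rightarrow> real) \<Rightarrow> real) \<Rightarrow> bool" where
  "separable_space X N \<longleftrightarrow>
     (\<exists>D. countable D \<and> D \<subseteq> X \<and> (\<forall>x\<in>X. \<forall>e>0. \<exists>d\<in>D. N (\<lambda>t. x t - d t) < e))"

definition bounded_functional ::
    "(real \<Rightarrow> real) set \<Rightarrow> ((real \<Rightarrow> real) \<Rightarrow> real) \<Rightarrow> ((real \<Rightarrow> real) \<Rightarrow> real) \<Rightarrow> bool" where
  "bounded_functional X N \<phi> \<longleftrightarrow>
     (\<forall>x\<in>X. \<forall>y\<in>X. \<phi> (\<lambda>t. x t + y t) = \<phi> x + \<phi> y) \<and>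
     (\<forall>x\<in>X. \<forall>c::real. \<phi> (\<lambda>t. c * x t) = c * \<phi> x) \<and>
     (\<exists>C. \<forall>x\<in>X. \<bar>\<phi> x\<bar> \<le> C * N x)"

definition dual_norm ::
    "(real \<Rightarrow> real) set \<Rightarrow> ((real \<Rightarrow> real) \<Rightarrow> real) \<Rightarrow> ((real \<Rightarrow> real) \<Rightarrow> real) \<Rightarrow> real" where
  "dual_norm X N \<phi> = Sup {\<bar>\<phi> x\<bar> | x. x \<in> X \<and> N x \<le> 1}"

text \<open>Smoothness at x0: exactly one norming functional (functionals being
identified when they agree on X).\<close>
definition smooth_at ::
    "(real \<Rightarrow> real) set \<Rightarrow> ((real \<Rightarrow> real) \<Rightarrow> real) \<Rightarrow> (real \<Rightarrow> real) \<Rightarrow> bool" where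
  "smooth_at X N x0 \<longleftrightarrow> x0 \<in> X \<and> N x0 = 1 \<and>
     (\<exists>\<phi>. bounded_functional X N \<phi> \<and> dual_norm X N \<phi> = 1 \<and> \<phi> x0 = 1) \<and>
     (\<forall>\<phi> \<psi>. bounded_functional X N \<phi> \<and> dual_norm X N \<phi> = 1 \<and> \<phi> x0 = 1 \<and>
             bounded_functional X N \<psi> \<and> dual_norm X N \<psi> = 1 \<and> \<psi> x0 = 1
             \<longrightarrow> (\<forall>x\<in>X. \<phi> x = \<psi> x))"

end

theory Submission
  imports Defs
begin

text \<open>
  (a) \<open>\<Longrightarrow>\<close> (b): in a symmetric space on [0,1] the integral is dominated by the norm. For a step
  function \<open>s\<close> with values \<open>c\<^sub>j\<close> on \<open>n\<close> disjoint cells of measure \<open>1/n\<close>, the \<open>n\<close> cyclic permutations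
  of the values give equimeasurable functions, all of norm \<open>\<parallel>s\<parallel>\<close>, whose sum is the constant \<open>\<Sum> c\<^sub>j\<close>;
  hence \<open>|\<Sum> c\<^sub>j| \<le> n \<parallel>s\<parallel>\<close>. Every nonnegative simple function dominates such a step function up to
  an error \<open>O(1/n)\<close> in the integral, so \<open>\<integral>|x| \<le> \<parallel>x\<parallel>\<close> and the integral is a norming functional
  at 1. If \<open>\<phi>\<close> is any norming functional and \<open>g = x - \<phi>(x)\<close>, then \<open>\<phi>(1 - c g) = 1\<close> for all \<open>c\<close>,
  so (a) forces \<open>\<integral>g = 0\<close>, i.e. \<open>\<phi>(x) = \<integral>x\<close>.

  (b) \<open>\<Longrightarrow>\<close> (a): if \<open>\<parallel>1 - c f\<parallel> \<ge> 1\<close> for all \<open>c\<close>, the Hahn--Banach theorem, applied to the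
  quotient seminorm modulo the line through \<open>f\<close>, gives a norming functional at 1 vanishing at \<open>f\<close>;
  by smoothness it is the integral, so \<open>\<integral>f = 0\<close>. For separable spaces Hahn--Banach needs no
  choice: a dominating sublinear functional is made linear along the vectors of a dense sequence
  one at a time, and the limit is linear.
\<close>

section \<open>Seminormed function spaces and a separable Hahn--Banach theorem\<close>

locale seminormed_function_space =
  fixes X :: "('a \<Rightarrow> real) set" and N :: "('a \<Rightarrow> real) \<Rightarrow> real"
  assumes zero_mem: "(\<lambda>_. 0) \<in> X"
    and add_mem: "x \<in> X \<Longrightarrow> y \<in> X \<Longrightarrow> (\<lambda>t. x t + y t) \<in> X"
    and scale_mem: "x \<in> X \<Longrightarrow> (\<lambda>t. c * x t) \<in> X"
    and norm_nonneg: "x \<in> X \<Longrightarrow> 0 \<le> N x"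
    and norm_scale: "x \<in> X \<Longrightarrow> N (\<lambda>t. c * x t) = \<bar>c\<bar> * N x"
    and norm_triangle: "x \<in> X \<Longrightarrow> y \<in> X \<Longrightarrow> N (\<lambda>t. x t + y t) \<le> N x + N y"
begin

lemma neg_mem: "x \<in> X \<Longrightarrow> (\<lambda>t. - x t) \<in> X"
  using scale_mem[of x "-1"] by simp

lemma add_scale_mem: "x \<in> X \<Longrightarrow> y \<in> X \<Longrightarrow> (\<lambda>t. x t + c * y t) \<in> X"
  by (simp add: add_mem scale_mem)

lemma diff_mem: "x \<in> X \<Longrightarrow> y \<in> X \<Longrightarrow> (\<lambda>t. x t - y t) \<in> X"
  using add_scale_mem[of x y "-1"] by simp

lemma norm_neg: "x \<in> X \<Longrightarrow> N (\<lambda>t. - x t) = N x"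
  using norm_scale[of x "-1"] by simp

lemma norm_zero: "N (\<lambda>_. 0) = 0"
  using norm_scale[OF zero_mem, of 0] by simp

lemma norm_diff_commute: "x \<in> X \<Longrightarrow> y \<in> X \<Longrightarrow> N (\<lambda>t. x t - y t) = N (\<lambda>t. y t - x t)"
  using norm_neg[OF diff_mem, of y x] by simp

lemma sum_mem_norm_sum_le:
  assumes "finite I" "\<And>i. i \<in> I \<Longrightarrow> f i \<in> X"
  shows "(\<lambda>t. \<Sum>i\<in>I. f i t) \<in> X \<and> N (\<lambda>t. \<Sum>i\<in>I. f i t) \<le> (\<Sum>i\<in>I. N (f i))"
  using assms
proof (induction I rule: finite_induct)
  case empty
  then show ?case using zero_mem norm_zero by simp
next
  case (insert i I)
  then show ?case
    using add_mem[of "f i" "\<lambda>t. \<Sum>i\<in>I. f i t"] norm_triangle[of "f i" "\<lambda>t. \<Sum>i\<in>I. f i t"] by auto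
qed

definition linear_functional :: "(('a \<Rightarrow> real) \<Rightarrow> real) \<Rightarrow> bool" where
  "linear_functional q \<longleftrightarrow>
     (\<forall>x\<in>X. \<forall>y\<in>X. q (\<lambda>t. x t + y t) = q x + q y) \<and> (\<forall>x\<in>X. \<forall>c. q (\<lambda>t. c * x t) = c * q x)"

lemma linear_functional_add_scale:
  "linear_functional q \<Longrightarrow> x \<in> X \<Longrightarrow> y \<in> X \<Longrightarrow> q (\<lambda>t. x t + c * y t) = q x + c * q y"
  unfolding linear_functional_def by (simp add: scale_mem)

definition dominated_sublinear :: "(('a \<Rightarrow> real) \<Rightarrow> real) \<Rightarrow> bool" where
  "dominated_sublinear p \<longleftrightarrow>
     (\<forall>x\<in>X. \<forall>y\<in>X. p (\<lambda>t. x t + y t) \<le> p x + p y) \<and>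
     (\<forall>x\<in>X. \<forall>c\<ge>0. p (\<lambda>t. c * x t) = c * p x) \<and> (\<forall>x\<in>X. p x \<le> N x)"

lemma
  assumes "dominated_sublinear p"
  shows sublinear_add: "x \<in> X \<Longrightarrow> y \<in> X \<Longrightarrow> p (\<lambda>t. x t + y t) \<le> p x + p y"
    and sublinear_scale: "x \<in> X \<Longrightarrow> 0 \<le> c \<Longrightarrow> p (\<lambda>t. c * x t) = c * p x"
    and sublinear_le_norm: "x \<in> X \<Longrightarrow> p x \<le> N x"
  using assms unfolding dominated_sublinear_def by blast+

lemma sublinear_zero: "dominated_sublinear p \<Longrightarrow> p (\<lambda>_. 0) = 0"
  using sublinear_scale[OF _ zero_mem, of p 0] by simp

lemma sublinear_neg_le: "dominated_sublinear p \<Longrightarrow> x \<in> X \<Longrightarrow> - p (\<lambda>t. - x t) \<le> p x"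
  using sublinear_add[OF _ _ neg_mem, of p x x] sublinear_zero[of p] by simp

text \<open>An infimum over a parameter of a jointly sublinear family is sublinear; \<open>flatten\<close> and
  \<open>quotient_norm\<close> below are of this form.\<close>

context
  fixes F :: "('a \<Rightarrow> real) \<Rightarrow> real \<Rightarrow> real" and S :: "real set" and L :: "('a \<Rightarrow> real) \<Rightarrow> real"
  assumes S0: "0 \<in> S"
    and S_add: "\<And>s s'. s \<in> S \<Longrightarrow> s' \<in> S \<Longrightarrow> s + s' \<in> S"
    and S_scale: "\<And>c s. 0 < c \<Longrightarrow> s \<in> S \<Longrightarrow> c * s \<in> S"
    and F_add: "\<And>x y s s'. x \<in> X \<Longrightarrow> y \<in> X \<Longrightarrow> s \<in> S \<Longrightarrow> s' \<in> S \<Longrightarrow>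
                  F (\<lambda>t. x t + y t) (s + s') \<le> F x s + F y s'"
    and F_scale: "\<And>x s c. x \<in> X \<Longrightarrow> s \<in> S \<Longrightarrow> 0 \<le> c \<Longrightarrow> F (\<lambda>t. c * x t) (c * s) = c * F x s"
    and F_lower: "\<And>x s. x \<in> X \<Longrightarrow> s \<in> S \<Longrightarrow> L x \<le> F x s" and L0: "L (\<lambda>_. 0) = 0"
    and F_norm: "\<And>x. x \<in> X \<Longrightarrow> F x 0 \<le> N x"
begin

lemma parametric_INF_le: "x \<in> X \<Longrightarrow> s \<in> S \<Longrightarrow> (INF s\<in>S. F x s) \<le> F x s"
  using F_lower by (intro cINF_lower bdd_belowI2) auto

lemma le_parametric_INF: "(\<And>s. s \<in> S \<Longrightarrow> c \<le> F x s) \<Longrightarrow> c \<le> (INF s\<in>S. F x s)"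
  using S0 by (intro cINF_greatest) auto

lemma parametric_INF_add:
  assumes x: "x \<in> X" and y: "y \<in> X"
  shows "(INF s\<in>S. F (\<lambda>t. x t + y t) s) \<le> (INF s\<in>S. F x s) + (INF s\<in>S. F y s)"
proof -
  have "(INF s\<in>S. F (\<lambda>t. x t + y t) s) - F x s \<le> (INF s\<in>S. F y s)" if s: "s \<in> S" for s
    using parametric_INF_le[OF add_mem[OF x y] S_add[OF s]] F_add[OF x y s]
    by (intro le_parametric_INF) fastforce
  then have "(INF s\<in>S. F (\<lambda>t. x t + y t) s) - (INF s\<in>S. F y s) \<le> (INF s\<in>S. F x s)"
    by (intro le_parametric_INF) (simp add: algebra_simps)
  then show ?thesis
    by simp
qed

lemma parametric_INF_scale:
  assumes x: "x \<in> X" and c: "0 \<le> c"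
  shows "(INF s\<in>S. F (\<lambda>t. c * x t) s) = c * (INF s\<in>S. F x s)"
proof (cases "c = 0")
  case True
  have "(INF s\<in>S. F (\<lambda>_. 0) s) \<le> 0"
    using parametric_INF_le[OF zero_mem S0] F_scale[OF x S0, of 0] by simp
  moreover have "0 \<le> (INF s\<in>S. F (\<lambda>_. 0) s)"
    using F_lower[OF zero_mem] L0 by (intro le_parametric_INF) auto
  ultimately show ?thesis
    using True by simp
next
  case False
  with c have c: "0 < c"
    by simp
  have "(INF s\<in>S. F (\<lambda>t. c * x t) s) \<le> c * F x s" if "s \<in> S" for s
    using parametric_INF_le[OF scale_mem[OF x, of c] S_scale[OF c that]] F_scale[OF x that, of c] c
    by simp
  then have "(INF s\<in>S. F (\<lambda>t. c * x t) s) / c \<le> (INF s\<in>S. F x s)"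
    using c by (intro le_parametric_INF) (simp add: divide_le_eq mult.commute)
  moreover have "c * (INF s\<in>S. F x s) \<le> F (\<lambda>t. c * x t) s" if s: "s \<in> S" for s
  proof -
    have "c * (INF s\<in>S. F x s) \<le> c * F x (s / c)"
      using parametric_INF_le[OF x S_scale[OF _ s, of "1 / c"]] c by simp
    also have "\<dots> = F (\<lambda>t. c * x t) s"
      using F_scale[OF x S_scale[OF _ s, of "1 / c"], of c] c by simp
    finally show ?thesis .
  qed
  then have "c * (INF s\<in>S. F x s) \<le> (INF s\<in>S. F (\<lambda>t. c * x t) s)"
    by (rule le_parametric_INF)
  ultimately show ?thesis
    using c by (simp add: divide_le_eq mult.commute)
qed

lemma dominated_sublinear_INF: "dominated_sublinear (\<lambda>x. INF s\<in>S. F x s)"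
proof -
  have "(INF s\<in>S. F x s) \<le> N x" if "x \<in> X" for x
    using parametric_INF_le[OF that S0] F_norm[OF that] by linarith
  then show ?thesis
    unfolding dominated_sublinear_def using parametric_INF_add parametric_INF_scale by blast
qed

end

text \<open>One step of the Hahn--Banach construction: \<open>flatten p d\<close> stays sublinear and below \<open>p\<close>
  but becomes odd on \<open>d\<close>.\<close>

definition flatten :: "(('a \<Rightarrow> real) \<Rightarrow> real) \<Rightarrow> ('a \<Rightarrow> real) \<Rightarrow> ('a \<Rightarrow> real) \<Rightarrow> real" where
  "flatten p d x = (INF s\<in>{0..}. p (\<lambda>t. x t + s * d t) - s * p d)"

lemma flatten_lower:
  assumes "dominated_sublinear p" "d \<in> X" "x \<in> X" "0 \<le> s"
  shows "- p (\<lambda>t. - x t) \<le> p (\<lambda>t. x t + s * d t) - s * p d"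
  using sublinear_add[OF assms(1) add_scale_mem[OF assms(3,2)] neg_mem[OF assms(3)], of s]
    sublinear_scale[OF assms(1,2,4)] by simp

lemma flatten_le:
  assumes "dominated_sublinear p" "d \<in> X" "x \<in> X" "0 \<le> s"
  shows "flatten p d x \<le> p (\<lambda>t. x t + s * d t) - s * p d"
  unfolding flatten_def using flatten_lower[OF assms(1-3)] assms(4)
  by (intro cINF_lower bdd_belowI2) auto

lemma flatten_le_self: "dominated_sublinear p \<Longrightarrow> d \<in> X \<Longrightarrow> x \<in> X \<Longrightarrow> flatten p d x \<le> p x"
  using flatten_le[of p d x 0] by simp

lemma flatten_direction:
  assumes "dominated_sublinear p" "d \<in> X"
  shows "flatten p d d = p d"
proof -
  have "p d \<le> p (\<lambda>t. d t + s * d t) - s * p d" if "0 \<le> s" for s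
    using sublinear_scale[OF assms, of "1 + s"] that by (simp add: algebra_simps)
  then have "p d \<le> flatten p d d"
    unfolding flatten_def by (intro cINF_greatest) auto
  with flatten_le_self[OF assms assms(2)] show ?thesis by simp
qed

lemma flatten_neg_direction:
  "dominated_sublinear p \<Longrightarrow> d \<in> X \<Longrightarrow> flatten p d (\<lambda>t. - d t) \<le> - p d"
  using flatten_le[OF _ _ neg_mem, of p d d 1] sublinear_zero[of p] by simp

lemma dominated_sublinear_flatten:
  assumes p: "dominated_sublinear p" and d: "d \<in> X"
  shows "dominated_sublinear (flatten p d)"
  unfolding flatten_def
proof (rule dominated_sublinear_INF[where L = "\<lambda>x. - p (\<lambda>t. - x t)"])
  fix x y s s' assume x: "x \<in> X" and y: "y \<in> X" and s: "s \<in> {0::real..}" and s': "s' \<in> {0::real..}"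
  have "(\<lambda>t. x t + y t + (s + s') * d t) = (\<lambda>t. (x t + s * d t) + (y t + s' * d t))"
    by (simp add: algebra_simps)
  then show "p (\<lambda>t. x t + y t + (s + s') * d t) - (s + s') * p d
             \<le> p (\<lambda>t. x t + s * d t) - s * p d + (p (\<lambda>t. y t + s' * d t) - s' * p d)"
    using sublinear_add[OF p add_scale_mem[OF x d, of s] add_scale_mem[OF y d, of s']]
    by (simp add: ring_distribs)
next
  fix x s and c :: real assume x: "x \<in> X" and s: "s \<in> {0::real..}" and c: "0 \<le> c"
  have "(\<lambda>t. c * x t + c * s * d t) = (\<lambda>t. c * (x t + s * d t))"
    by (simp add: algebra_simps)
  then show "p (\<lambda>t. c * x t + c * s * d t) - c * s * p d = c * (p (\<lambda>t. x t + s * d t) - s * p d)"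
    using sublinear_scale[OF p add_scale_mem[OF x d, of s] c] by (simp add: right_diff_distrib)
next
  fix x s assume "x \<in> X" "s \<in> {0::real..}"
  then show "- p (\<lambda>t. - x t) \<le> p (\<lambda>t. x t + s * d t) - s * p d"
    using flatten_lower[OF p d] by simp
qed (use p sublinear_zero sublinear_le_norm in auto)

definition quotient_norm :: "('a \<Rightarrow> real) \<Rightarrow> ('a \<Rightarrow> real) \<Rightarrow> real" where
  "quotient_norm f x = (INF s. N (\<lambda>t. x t + s * f t))"

lemma quotient_norm_le: "f \<in> X \<Longrightarrow> x \<in> X \<Longrightarrow> quotient_norm f x \<le> N (\<lambda>t. x t + s * f t)"
  unfolding quotient_norm_def using norm_nonneg[OF add_scale_mem]
  by (intro cINF_lower bdd_belowI2) auto

lemma dominated_sublinear_quotient_norm: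
  assumes f: "f \<in> X"
  shows "dominated_sublinear (quotient_norm f)"
  unfolding quotient_norm_def
proof (rule dominated_sublinear_INF[where L = "\<lambda>_. 0"])
  fix x y s s' assume x: "x \<in> X" and y: "y \<in> X"
  have "(\<lambda>t. x t + y t + (s + s') * f t) = (\<lambda>t. (x t + s * f t) + (y t + s' * f t))"
    by (simp add: algebra_simps)
  then show "N (\<lambda>t. x t + y t + (s + s') * f t) \<le> N (\<lambda>t. x t + s * f t) + N (\<lambda>t. y t + s' * f t)"
    using norm_triangle[OF add_scale_mem[OF x f] add_scale_mem[OF y f]] by simp
next
  fix x s and c :: real assume x: "x \<in> X" and c: "0 \<le> c"
  have "(\<lambda>t. c * x t + c * s * f t) = (\<lambda>t. c * (x t + s * f t))"
    by (simp add: algebra_simps)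
  then show "N (\<lambda>t. c * x t + c * s * f t) = c * N (\<lambda>t. x t + s * f t)"
    using norm_scale[OF add_scale_mem[OF x f]] c by simp
qed (use f norm_nonneg add_scale_mem in auto)

primrec flatten_seq :: "(('a \<Rightarrow> real) \<Rightarrow> real) \<Rightarrow> (nat \<Rightarrow> 'a \<Rightarrow> real) \<Rightarrow> nat \<Rightarrow> ('a \<Rightarrow> real) \<Rightarrow> real"
  where
    "flatten_seq p e 0 = p"
  | "flatten_seq p e (Suc n) = flatten (flatten_seq p e n) (e n)"

definition flatten_limit :: "(('a \<Rightarrow> real) \<Rightarrow> real) \<Rightarrow> (nat \<Rightarrow> 'a \<Rightarrow> real) \<Rightarrow> ('a \<Rightarrow> real) \<Rightarrow> real" where
  "flatten_limit p e x = (INF n. flatten_seq p e n x)"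

context
  fixes p :: "('a \<Rightarrow> real) \<Rightarrow> real" and e :: "nat \<Rightarrow> 'a \<Rightarrow> real"
  assumes p: "dominated_sublinear p" and e: "\<And>k. e k \<in> X"
begin

lemma dominated_sublinear_flatten_seq: "dominated_sublinear (flatten_seq p e n)"
  by (induction n) (simp_all add: p dominated_sublinear_flatten e)

lemma flatten_seq_antimono:
  assumes "x \<in> X" "m \<le> n"
  shows "flatten_seq p e n x \<le> flatten_seq p e m x"
proof -
  have "decseq (\<lambda>n. flatten_seq p e n x)"
    using flatten_le_self[OF dominated_sublinear_flatten_seq e assms(1)] by (intro decseq_SucI) simp
  then show ?thesis
    using assms(2) by (rule decseqD)
qed

lemma flatten_seq_lower: "x \<in> X \<Longrightarrow> - p (\<lambda>t. - x t) \<le> flatten_seq p e n x"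
  using sublinear_neg_le[OF dominated_sublinear_flatten_seq, of x n]
    flatten_seq_antimono[OF neg_mem, of x 0 n] by simp

lemma flatten_seq_odd:
  assumes "k < n"
  shows "flatten_seq p e n (\<lambda>t. - e k t) = - flatten_seq p e n (e k)"
proof -
  have "flatten_seq p e n (e k) + flatten_seq p e n (\<lambda>t. - e k t)
        \<le> flatten_seq p e (Suc k) (e k) + flatten_seq p e (Suc k) (\<lambda>t. - e k t)"
    using assms by (intro add_mono flatten_seq_antimono e neg_mem) auto
  also have "\<dots> \<le> 0"
    using flatten_direction[OF dominated_sublinear_flatten_seq e, of k k]
      flatten_neg_direction[OF dominated_sublinear_flatten_seq e, of k k] by simp
  finally show ?thesis
    using sublinear_neg_le[OF dominated_sublinear_flatten_seq e, of n k] by linarith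
qed

lemma flatten_seq_bdd_below: "x \<in> X \<Longrightarrow> bdd_below (range (\<lambda>n. flatten_seq p e n x))"
  using flatten_seq_lower by (intro bdd_belowI2[where m = "- p (\<lambda>t. - x t)"])

lemma flatten_limit_le: "x \<in> X \<Longrightarrow> flatten_limit p e x \<le> flatten_seq p e n x"
  unfolding flatten_limit_def by (intro cINF_lower flatten_seq_bdd_below) auto

lemma flatten_seq_tendsto: "x \<in> X \<Longrightarrow> (\<lambda>n. flatten_seq p e n x) \<longlonglongrightarrow> flatten_limit p e x"
  unfolding flatten_limit_def using flatten_seq_antimono
  by (intro LIMSEQ_decseq_INF flatten_seq_bdd_below antimonoI) auto

lemma dominated_sublinear_flatten_limit: "dominated_sublinear (flatten_limit p e)"
  unfolding dominated_sublinear_def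
proof (intro conjI ballI allI impI)
  fix x y assume "x \<in> X" "y \<in> X"
  then show "flatten_limit p e (\<lambda>t. x t + y t) \<le> flatten_limit p e x + flatten_limit p e y"
    using sublinear_add[OF dominated_sublinear_flatten_seq]
    by (intro LIMSEQ_le[OF flatten_seq_tendsto tendsto_add[OF flatten_seq_tendsto flatten_seq_tendsto]])
       (auto intro: add_mem)
next
  fix x and c :: real assume x: "x \<in> X" and c: "0 \<le> c"
  have "(\<lambda>n. flatten_seq p e n (\<lambda>t. c * x t)) = (\<lambda>n. c * flatten_seq p e n x)"
    using sublinear_scale[OF dominated_sublinear_flatten_seq x c] by simp
  then show "flatten_limit p e (\<lambda>t. c * x t) = c * flatten_limit p e x"
    using flatten_seq_tendsto[OF scale_mem[OF x, of c]] tendsto_mult_left[OF flatten_seq_tendsto[OF x]]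
    by (metis LIMSEQ_unique)
next
  fix x assume x: "x \<in> X"
  show "flatten_limit p e x \<le> N x"
    using flatten_limit_le[OF x, of 0] sublinear_le_norm[OF p x] by simp
qed

lemma flatten_limit_odd: "flatten_limit p e (\<lambda>t. - e k t) = - flatten_limit p e (e k)"
proof -
  have "eventually (\<lambda>n. - flatten_seq p e n (e k) = flatten_seq p e n (\<lambda>t. - e k t)) sequentially"
    using eventually_gt_at_top[of k] by eventually_elim (simp add: flatten_seq_odd)
  then have "(\<lambda>n. flatten_seq p e n (\<lambda>t. - e k t)) \<longlonglongrightarrow> - flatten_limit p e (e k)"
    by (rule Lim_transform_eventually[OF tendsto_minus[OF flatten_seq_tendsto[OF e]]])
  then show ?thesis
    using flatten_seq_tendsto[OF neg_mem[OF e]] LIMSEQ_unique by blast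
qed

end

lemma odd_if_odd_dense:
  assumes q: "dominated_sublinear q" and x: "x \<in> X"
    and approx: "\<And>\<epsilon>. 0 < \<epsilon> \<Longrightarrow> \<exists>y\<in>X. N (\<lambda>t. x t - y t) < \<epsilon> \<and> q (\<lambda>t. - y t) = - q y"
  shows "q (\<lambda>t. - x t) = - q x"
proof -
  have le_shift: "q z \<le> q y + N (\<lambda>t. z t - y t)" if "z \<in> X" "y \<in> X" for z y
    using sublinear_add[OF q that(2) diff_mem[OF that]] sublinear_le_norm[OF q diff_mem[OF that]] by simp
  have bound: "q x + q (\<lambda>t. - x t) \<le> 2 * N (\<lambda>t. x t - y t)"
    if "y \<in> X" "q (\<lambda>t. - y t) = - q y" for y
    using le_shift[OF x that(1)] le_shift[OF neg_mem[OF x] neg_mem[OF that(1)]] that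
      norm_diff_commute[OF x that(1)] by simp
  then have "q x + q (\<lambda>t. - x t) \<le> 0 + \<epsilon>" if "0 < \<epsilon>" for \<epsilon>
  proof -
    obtain y where "y \<in> X" "N (\<lambda>t. x t - y t) < \<epsilon> / 2" "q (\<lambda>t. - y t) = - q y"
      using approx[of "\<epsilon> / 2"] \<open>0 < \<epsilon>\<close> by auto
    then show ?thesis
      using bound[OF \<open>y \<in> X\<close> \<open>q (\<lambda>t. - y t) = - q y\<close>] by linarith
  qed
  then have "q x + q (\<lambda>t. - x t) \<le> 0"
    by (rule field_le_epsilon)
  with sublinear_neg_le[OF q x] show ?thesis by simp
qed

lemma linear_if_odd:
  assumes q: "dominated_sublinear q" and odd: "\<And>x. x \<in> X \<Longrightarrow> q (\<lambda>t. - x t) = - q x"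
  shows "linear_functional q"
  unfolding linear_functional_def
proof (intro conjI ballI allI)
  fix x y assume x: "x \<in> X" and y: "y \<in> X"
  have "- q (\<lambda>t. x t + y t) \<le> - q x - q y"
    using sublinear_add[OF q neg_mem[OF x] neg_mem[OF y]] odd[OF add_mem[OF x y]] odd[OF x] odd[OF y]
    by simp
  with sublinear_add[OF q x y] show "q (\<lambda>t. x t + y t) = q x + q y" by simp
next
  fix x c assume x: "x \<in> X"
  show "q (\<lambda>t. c * x t) = c * q x"
  proof (cases "0 \<le> c")
    case True
    then show ?thesis using sublinear_scale[OF q x] by simp
  next
    case False
    then show ?thesis using sublinear_scale[OF q neg_mem[OF x], of "- c"] odd[OF x] by simp
  qed
qed

theorem separable_Hahn_Banach:
  assumes p: "dominated_sublinear p" and x0: "x0 \<in> X"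
    and D: "countable D" "D \<subseteq> X" and dense: "\<And>x \<epsilon>. x \<in> X \<Longrightarrow> 0 < \<epsilon> \<Longrightarrow> \<exists>d\<in>D. N (\<lambda>t. x t - d t) < \<epsilon>"
  shows "\<exists>q. linear_functional q \<and> (\<forall>x\<in>X. q x \<le> p x) \<and> q x0 = p x0"
proof -
  have "D \<noteq> {}"
    using dense[OF x0, of 1] by auto
  define e where "e = case_nat x0 (from_nat_into D)"
  have "from_nat_into D j \<in> X" for j
    using from_nat_into[OF \<open>D \<noteq> {}\<close>] D(2) by blast
  then have e: "e k \<in> X" for k
    using x0 by (auto simp: e_def split: nat.split)
  define q where "q = flatten_limit p e"
  have q: "dominated_sublinear q"
    unfolding q_def by (rule dominated_sublinear_flatten_limit[of p e, OF p e])
  have "q (\<lambda>t. - x t) = - q x" if x: "x \<in> X" for x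
  proof (rule odd_if_odd_dense[OF q x])
    fix \<epsilon> :: real assume "0 < \<epsilon>"
    then obtain d where d: "d \<in> D" "N (\<lambda>t. x t - d t) < \<epsilon>"
      using dense[OF x] by blast
    then obtain j where "d = e (Suc j)"
      using from_nat_into_surj[OF D(1) d(1)] by (auto simp: e_def)
    then have "q (\<lambda>t. - d t) = - q d"
      using flatten_limit_odd[of p e "Suc j", OF p e] unfolding q_def by simp
    with d D show "\<exists>y\<in>X. N (\<lambda>t. x t - y t) < \<epsilon> \<and> q (\<lambda>t. - y t) = - q y"
      by blast
  qed
  then have "linear_functional q"
    by (rule linear_if_odd[OF q])
  moreover have le: "\<forall>x\<in>X. q x \<le> p x"
    using flatten_limit_le[of p e _ 0, OF p e] unfolding q_def by simp
  moreover have "q x0 = p x0"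
  proof (rule antisym)
    show "q x0 \<le> p x0"
      using le x0 by blast
    show "p x0 \<le> q x0"
      using flatten_limit_odd[of p e 0, OF p e] flatten_limit_le[of p e _ 1, OF p e neg_mem[OF x0]]
        flatten_neg_direction[OF p x0] unfolding q_def by (simp add: e_def)
  qed
  ultimately show ?thesis
    by blast
qed

lemma linear_functional_abs_le:
  assumes "linear_functional q" "\<And>x. x \<in> X \<Longrightarrow> q x \<le> N x" "x \<in> X"
  shows "\<bar>q x\<bar> \<le> N x"
proof -
  have "q (\<lambda>t. (- 1) * x t) = (- 1) * q x"
    using assms(1,3) unfolding linear_functional_def by blast
  then show ?thesis
    using assms(2)[OF assms(3)] assms(2)[OF neg_mem[OF assms(3)]] norm_neg[OF assms(3)] by simp
qed

lemma exists_functional_vanishing: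
  assumes x0: "x0 \<in> X" and f: "f \<in> X" and dist: "\<And>s. N x0 \<le> N (\<lambda>t. x0 t + s * f t)"
    and D: "countable D" "D \<subseteq> X" and dense: "\<And>x \<epsilon>. x \<in> X \<Longrightarrow> 0 < \<epsilon> \<Longrightarrow> \<exists>d\<in>D. N (\<lambda>t. x t - d t) < \<epsilon>"
  shows "\<exists>q. linear_functional q \<and> (\<forall>x\<in>X. \<bar>q x\<bar> \<le> N x) \<and> q x0 = N x0 \<and> q f = 0"
proof -
  have p: "dominated_sublinear (quotient_norm f)"
    by (rule dominated_sublinear_quotient_norm[OF f])
  obtain q where q: "linear_functional q" and q_le: "\<forall>x\<in>X. q x \<le> quotient_norm f x"
    and q_x0: "q x0 = quotient_norm f x0"
    using separable_Hahn_Banach[OF p x0 D dense] by blast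
  have "quotient_norm f x0 = N x0"
    using quotient_norm_le[OF f x0, of 0] dist unfolding quotient_norm_def
    by (intro antisym cINF_greatest) auto
  moreover have "q f \<le> 0"
    using q_le[rule_format, OF f] quotient_norm_le[OF f f, of "-1"] norm_zero by simp
  moreover have "q (\<lambda>t. - f t) \<le> 0"
    using q_le[rule_format, OF neg_mem[OF f]] quotient_norm_le[OF f neg_mem[OF f], of 1] norm_zero
    by simp
  moreover have "q (\<lambda>t. (- 1) * f t) = (- 1) * q f"
    using q f unfolding linear_functional_def by blast
  moreover have "\<bar>q x\<bar> \<le> N x" if "x \<in> X" for x
  proof (rule linear_functional_abs_le[OF q _ that])
    show "q x \<le> N x" if "x \<in> X" for x
      using q_le[rule_format, OF that] sublinear_le_norm[OF p that] by linarith
  qed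
  ultimately show ?thesis
    using q q_x0 by (intro exI[of _ q]) simp
qed

end

section \<open>Step functions on equipartitions of [0,1]\<close>

lemma disjoint_family_on_case_sum:
  assumes C: "disjoint_family_on C I" and E: "disjoint_family_on E K"
    and CE: "\<And>i k. i \<in> I \<Longrightarrow> k \<in> K \<Longrightarrow> C i \<inter> E k = {}"
  shows "disjoint_family_on (case_sum C E) (I <+> K)"
  unfolding disjoint_family_on_def
proof (intro ballI impI)
  fix a b assume a: "a \<in> I <+> K" and b: "b \<in> I <+> K" and "a \<noteq> b"
  consider (LL) i j where "a = Inl i" "b = Inl j" "i \<in> I" "j \<in> I"
    | (LR) i k where "a = Inl i" "b = Inr k" "i \<in> I" "k \<in> K"
    | (RL) k i where "a = Inr k" "b = Inl i" "k \<in> K" "i \<in> I"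
    | (RR) k l where "a = Inr k" "b = Inr l" "k \<in> K" "l \<in> K"
    using a b by blast
  then show "case_sum C E a \<inter> case_sum C E b = {}"
  proof cases
    case LL
    then show ?thesis using C \<open>a \<noteq> b\<close> unfolding disjoint_family_on_def by simp
  next
    case LR
    then show ?thesis using CE by simp
  next
    case RL
    then show ?thesis using CE[of i k] by (simp add: Int_commute)
  next
    case RR
    then show ?thesis using E \<open>a \<noteq> b\<close> unfolding disjoint_family_on_def by simp
  qed
qed

interpretation M01: finite_measure M01
  by (rule finite_measure_lebesgue_on) simp

lemma measure_M01_space: "measure M01 (space M01) = 1"
  by (simp add: measure_restrict_space)

lemma sets_M01_iff: "A \<in> sets M01 \<longleftrightarrow> A \<subseteq> {0..1} \<and> A \<in> sets lebesgue"
  by (simp add: sets_restrict_space_iff)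

lemma measure_M01_finite_Union:
  "finite S \<Longrightarrow> (\<And>i. i \<in> S \<Longrightarrow> A i \<in> sets M01) \<Longrightarrow> disjoint_family_on A S \<Longrightarrow>
    measure M01 (\<Union>i\<in>S. A i) = (\<Sum>i\<in>S. measure M01 (A i))"
  by (intro measure_finite_Union) auto

definition step_function :: "'i set \<Rightarrow> ('i \<Rightarrow> real) \<Rightarrow> ('i \<Rightarrow> real set) \<Rightarrow> real \<Rightarrow> real" where
  "step_function J c B t = (\<Sum>j\<in>J. c j * indicator (B j) t)"

definition equipartition :: "nat \<Rightarrow> 'i set \<Rightarrow> ('i \<Rightarrow> real set) \<Rightarrow> bool" where
  "equipartition n J B \<longleftrightarrow> 0 < n \<and> finite J \<and> card J = n \<and> disjoint_family_on B J \<and>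
     (\<forall>j\<in>J. B j \<in> sets M01 \<and> measure M01 (B j) = 1 / n)"

lemma step_function_cell:
  "finite J \<Longrightarrow> disjoint_family_on B J \<Longrightarrow> j \<in> J \<Longrightarrow> t \<in> B j \<Longrightarrow> step_function J c B t = c j"
  unfolding step_function_def by (rule sum_indicator_disjoint_family)

lemma step_function_outside: "(\<And>j. j \<in> J \<Longrightarrow> t \<notin> B j) \<Longrightarrow> step_function J c B t = 0"
  unfolding step_function_def by (simp add: sum.neutral)

lemma step_function_le:
  assumes "finite J" "disjoint_family_on B J" "\<And>j. j \<in> J \<Longrightarrow> t \<in> B j \<Longrightarrow> c j \<le> y" "0 \<le> y"
  shows "step_function J c B t \<le> y"
proof (cases "\<exists>j\<in>J. t \<in> B j")
  case True
  then obtain j where "j \<in> J" "t \<in> B j"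
    by blast
  then show ?thesis
    using step_function_cell[OF assms(1,2) \<open>j \<in> J\<close> \<open>t \<in> B j\<close>] assms(3) by simp
next
  case False
  then show ?thesis
    using step_function_outside[of J t B c] assms(4) by auto
qed

lemma measurable_step_function:
  "(\<And>j. j \<in> J \<Longrightarrow> B j \<in> sets M01) \<Longrightarrow> step_function J c B \<in> borel_measurable M01"
  unfolding step_function_def
  by (intro borel_measurable_sum borel_measurable_times borel_measurable_const borel_measurable_indicator)

lemma equipartition_AE_cover:
  assumes "equipartition n J B"
  shows "AE t in M01. \<exists>j\<in>J. t \<in> B j"
proof -
  let ?U = "\<Union>j\<in>J. B j"
  have U: "?U \<in> sets M01"
    using assms unfolding equipartition_def by auto
  have "measure M01 ?U = (\<Sum>j\<in>J. measure M01 (B j))"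
    using assms unfolding equipartition_def by (intro measure_M01_finite_Union) auto
  also have "\<dots> = 1"
    using assms unfolding equipartition_def by simp
  finally have "emeasure M01 (space M01 - ?U) = 0"
    using M01.finite_measure_compl[OF U] measure_M01_space by (simp add: M01.emeasure_eq_measure)
  then show ?thesis
    using U by (intro AE_I'[of "space M01 - ?U"]) auto
qed

lemma AE_step_function_greater_iff:
  assumes B: "equipartition n J B"
  shows "AE t in M01. t \<in> {t \<in> space M01. r < step_function J c B t} \<longleftrightarrow> t \<in> (\<Union>j\<in>{j\<in>J. r < c j}. B j)"
  using equipartition_AE_cover[OF B]
proof eventually_elim
  case (elim t)
  have J: "finite J" "disjoint_family_on B J" "\<And>j. j \<in> J \<Longrightarrow> B j \<in> sets M01"
    using B unfolding equipartition_def by auto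
  obtain i where i: "i \<in> J" "t \<in> B i"
    using elim by blast
  have "t \<in> space M01"
    using sets.sets_into_space[OF J(3)[OF i(1)]] i(2) by blast
  moreover have "t \<in> (\<Union>j\<in>{j\<in>J. r < c j}. B j) \<longleftrightarrow> r < c i"
  proof
    assume "t \<in> (\<Union>j\<in>{j\<in>J. r < c j}. B j)"
    then obtain j where "j \<in> J" "r < c j" "t \<in> B j"
      by blast
    moreover have "j = i"
      using J(2) i \<open>j \<in> J\<close> \<open>t \<in> B j\<close> unfolding disjoint_family_on_def by blast
    ultimately show "r < c i"
      by simp
  qed (use i in blast)
  ultimately show ?case
    using step_function_cell[OF J(1,2) i] by simp
qed

lemma measure_step_function_greater:
  assumes B: "equipartition n J B"
  shows "measure M01 {t \<in> space M01. r < step_function J c B t} = card {j\<in>J. r < c j} / n"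
proof -
  let ?I = "{j\<in>J. r < c j}"
  have J: "finite J" "disjoint_family_on B J" "\<And>j. j \<in> J \<Longrightarrow> B j \<in> sets M01"
    "\<And>j. j \<in> J \<Longrightarrow> measure M01 (B j) = 1 / n"
    using B unfolding equipartition_def by auto
  have "{t \<in> space M01. r < step_function J c B t} \<in> sets M01"
    by (rule borel_measurable_iff_greater[THEN iffD1, rule_format, OF measurable_step_function[OF J(3)]])
  moreover have "(\<Union>j\<in>?I. B j) \<in> sets M01"
    using J(1,3) by (intro sets.finite_UN) auto
  ultimately have "measure M01 {t \<in> space M01. r < step_function J c B t} = measure M01 (\<Union>j\<in>?I. B j)"
    using AE_step_function_greater_iff[OF B] by (intro measure_eq_AE)
  also have "\<dots> = (\<Sum>j\<in>?I. measure M01 (B j))"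
    using J(1,3) disjoint_family_on_mono[of ?I J B, OF _ J(2)] by (intro measure_M01_finite_Union) auto
  also have "\<dots> = card ?I / n"
    using J(4) by simp
  finally show ?thesis .
qed

lemma equimeasurable_step_function_permute:
  assumes B: "equipartition n J B" and \<pi>: "bij_betw \<pi> J J"
  shows "equimeasurable (step_function J (\<lambda>j. c (\<pi> j)) B) (step_function J c B)"
  unfolding equimeasurable_def
proof
  fix r
  have "card {j\<in>J. r < c (\<pi> j)} = card {j\<in>J. r < c j}"
    by (rule bij_betw_same_card[OF bij_betw_Collect[OF \<pi>]]) simp
  then have "measure M01 {t \<in> space M01. r < step_function J (\<lambda>j. c (\<pi> j)) B t}
             = measure M01 {t \<in> space M01. r < step_function J c B t}"
    unfolding measure_step_function_greater[OF B] by simp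
  then show "emeasure M01 {t \<in> space M01. step_function J (\<lambda>j. c (\<pi> j)) B t > r}
             = emeasure M01 {t \<in> space M01. step_function J c B t > r}"
    by (simp add: M01.emeasure_eq_measure)
qed

lemma bij_betw_add_mod: "bij_betw (\<lambda>i. (i + k) mod n) {..<n} {..<(n::nat)}"
proof (cases "n = 0")
  case False
  have inj: "inj_on (\<lambda>i. (i + k) mod n) {..<n}"
  proof (rule inj_onI)
    fix a b assume "a \<in> {..<n}" "b \<in> {..<n}" "(a + k) mod n = (b + k) mod n"
    then have "n dvd nat \<bar>int a - int b\<bar>" "nat \<bar>int a - int b\<bar> < n"
      by (simp_all add: mod_eq_iff_dvd_symdiff_nat)
    then have "nat \<bar>int a - int b\<bar> = 0"
      using nat_dvd_not_less by blast
    then show "a = b"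
      by simp
  qed
  moreover have "(\<lambda>i. (i + k) mod n) ` {..<n} \<subseteq> {..<n}"
    using False by auto
  ultimately show ?thesis
    by (simp add: bij_betw_def endo_inj_surj)
qed (simp add: bij_betw_def)

lemma exists_cyclic_permutations:
  assumes "finite J"
  shows "\<exists>\<pi>. (\<forall>k. bij_betw (\<pi> k) J J) \<and> (\<forall>j\<in>J. bij_betw (\<lambda>k. \<pi> k j) {..<card J} J)"
proof -
  let ?n = "card J"
  obtain h where h: "bij_betw h {..<?n} J"
    using ex_bij_betw_nat_finite[OF assms] by (auto simp: atLeast0LessThan)
  define \<pi> where "\<pi> k = h \<circ> (\<lambda>i. (i + k) mod ?n) \<circ> inv_into {..<?n} h" for k
  have "bij_betw (\<pi> k) J J" for k
    unfolding \<pi>_def by (intro bij_betw_trans[OF bij_betw_inv_into[OF h]] bij_betw_trans[OF bij_betw_add_mod h])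
  moreover have "bij_betw (\<lambda>k. \<pi> k j) {..<?n} J" if "j \<in> J" for j
  proof -
    have "bij_betw (h \<circ> (\<lambda>k. (k + inv_into {..<?n} h j) mod ?n)) {..<?n} J"
      by (rule bij_betw_trans[OF bij_betw_add_mod h])
    then show ?thesis
      unfolding \<pi>_def by (simp add: add.commute comp_def)
  qed
  ultimately show ?thesis
    by blast
qed

lemma measure_M01_Int_Ioc_le:
  assumes "A \<in> sets M01" "t \<le> t'"
  shows "measure M01 (A \<inter> {t<..t'}) \<le> t' - t"
proof -
  have A: "A \<inter> {t<..t'} \<in> sets lebesgue" "A \<inter> {t<..t'} \<subseteq> {0..1}"
    using assms(1) by (auto simp: sets_M01_iff)
  then have "measure M01 (A \<inter> {t<..t'}) = measure lebesgue (A \<inter> {t<..t'})"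
    by (simp add: measure_restrict_space)
  also have "\<dots> \<le> measure lebesgue {t..t'}"
    using A(1) by (intro measure_mono_fmeasurable) auto
  also have "\<dots> = t' - t"
    using assms(2) by simp
  finally show ?thesis .
qed

lemma measure_M01_Int_atMost_split:
  assumes "A \<in> sets M01" "t \<le> t'"
  shows "measure M01 (A \<inter> {..t'}) = measure M01 (A \<inter> {..t}) + measure M01 (A \<inter> {t<..t'})"
proof -
  have "A \<inter> {..t'} = (A \<inter> {..t}) \<union> (A \<inter> {t<..t'})"
    using assms(2) by auto
  moreover have "A \<inter> {..t} \<in> sets M01" "A \<inter> {t<..t'} \<in> sets M01"
    using assms(1) by (auto simp: sets_M01_iff)
  moreover have "(A \<inter> {..t}) \<inter> (A \<inter> {t<..t'}) = {}"
    by auto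
  ultimately show ?thesis
    using M01.finite_measure_Union by presburger
qed

lemma exists_measure_M01_Int_atMost_eq:
  assumes A: "A \<in> sets M01" and a: "0 \<le> a" "a \<le> measure M01 A"
  shows "\<exists>\<tau>. measure M01 (A \<inter> {..\<tau>}) = a"
proof -
  define g where "g \<tau> = measure M01 (A \<inter> {..\<tau>})" for \<tau>
  have dist_le: "dist (g \<tau>) (g \<tau>') \<le> dist \<tau> \<tau>'" if "\<tau> \<le> \<tau>'" for \<tau> \<tau>'
    using measure_M01_Int_atMost_split[OF A that] measure_M01_Int_Ioc_le[OF A that] that
    by (simp add: g_def dist_real_def)
  have "continuous_on {-1..1} g"
  proof (rule lipschitz_on_continuous_on)
    show "1-lipschitz_on {-1..1} g"
    proof (rule lipschitz_onI)
      fix \<tau> \<tau>'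
      show "dist (g \<tau>) (g \<tau>') \<le> 1 * dist \<tau> \<tau>'"
        using dist_le[of \<tau> \<tau>'] dist_le[of \<tau>' \<tau>] by (cases "\<tau> \<le> \<tau>'") (simp_all add: dist_commute)
    qed simp
  qed
  moreover have "A \<inter> {..-1} = {}" "A \<inter> {..1} = A"
    using A by (auto simp: sets_M01_iff)
  then have "g (-1) \<le> a" "a \<le> g 1"
    using a by (simp_all add: g_def)
  ultimately obtain \<tau> where "g \<tau> = a"
    using IVT'[of g "-1" a 1] by auto
  then show ?thesis
    unfolding g_def by blast
qed

lemma exists_measure_M01_Int_atMost_grid:
  fixes n :: nat
  assumes A: "A \<in> sets M01" and n: "0 < n" and p: "real p \<le> n * measure M01 A"
  shows "\<exists>\<tau>. (\<forall>i::nat. i \<le> p \<longrightarrow> measure M01 (A \<inter> {..\<tau> i}) = real i / n) \<and>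
           (\<forall>i j::nat. i < j \<longrightarrow> j \<le> p \<longrightarrow> \<tau> i < \<tau> j)"
proof -
  have "\<exists>\<tau>. measure M01 (A \<inter> {..\<tau>}) = i / n" if "i \<in> {..p}" for i
  proof -
    have "i / n \<le> measure M01 A"
      using that p n by (simp add: divide_le_eq mult.commute)
    then show ?thesis
      by (intro exists_measure_M01_Int_atMost_eq[OF A]) auto
  qed
  then obtain \<tau> where \<tau>: "\<And>i. i \<le> p \<Longrightarrow> measure M01 (A \<inter> {..\<tau> i}) = i / n"
    using bchoice[of "{..p}" "\<lambda>i \<tau>. measure M01 (A \<inter> {..\<tau>}) = i / n"] by auto
  have "\<tau> i < \<tau> j" if "i < j" "j \<le> p" for i j
  proof (rule ccontr)
    assume "\<not> \<tau> i < \<tau> j"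
    then have "measure M01 (A \<inter> {..\<tau> j}) \<le> measure M01 (A \<inter> {..\<tau> i})"
      using measure_M01_Int_atMost_split[OF A, of "\<tau> j" "\<tau> i"] by simp
    then have "real j / n \<le> real i / n"
      using \<tau>[of i] \<tau>[of j] that by simp
    with that n show False
      by (simp add: divide_le_cancel)
  qed
  with \<tau> show ?thesis
    by (intro exI[of _ \<tau>]) simp
qed

lemma exists_disjoint_cells:
  fixes n :: nat
  assumes A: "A \<in> sets M01" and n: "0 < n" and p: "real p \<le> n * measure M01 A"
  shows "\<exists>C. disjoint_family_on C {..<p} \<and> (\<forall>i<p. C i \<in> sets M01 \<and> C i \<subseteq> A \<and> measure M01 (C i) = 1 / n)"
proof -
  obtain \<tau> where \<tau>: "\<And>i. i \<le> p \<Longrightarrow> measure M01 (A \<inter> {..\<tau> i}) = i / n"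
    and \<tau>_less: "\<And>i j. i < j \<Longrightarrow> j \<le> p \<Longrightarrow> \<tau> i < \<tau> j"
    using exists_measure_M01_Int_atMost_grid[OF A n p] by blast
  define C where "C i = A \<inter> {\<tau> i<..\<tau> (Suc i)}" for i
  have "measure M01 (C i) = 1 / n" if "i < p" for i
    using measure_M01_Int_atMost_split[OF A less_imp_le[OF \<tau>_less[of i "Suc i"]]] \<tau>[of i] \<tau>[of "Suc i"] that
    by (simp add: C_def add_divide_distrib)
  moreover have "C i \<in> sets M01" for i
    using A by (auto simp: C_def sets_M01_iff)
  moreover have "C i \<inter> C j = {}" if "i < j" "j < p" for i j
  proof -
    have "\<tau> (Suc i) \<le> \<tau> j"
      using \<tau>_less[of "Suc i" j] that by (cases "Suc i = j") auto
    then show ?thesis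
      by (auto simp: C_def)
  qed
  then have "disjoint_family_on C {..<p}"
    unfolding disjoint_family_on_def by (metis Int_commute lessThan_iff nat_neq_iff)
  ultimately show ?thesis
    by (auto simp: C_def)
qed

lemma equipartition_extend:
  assumes I: "finite I" "card I \<le> n" "0 < n"
    and C: "disjoint_family_on C I" "\<And>i. i \<in> I \<Longrightarrow> C i \<in> sets M01"
      "\<And>i. i \<in> I \<Longrightarrow> measure M01 (C i) = 1 / n"
  shows "\<exists>E. equipartition n (I <+> {..<n - card I}) (case_sum C E)"
proof -
  let ?W = "\<Union>i\<in>I. C i" and ?r = "n - card I"
  have W: "?W \<in> sets M01"
    using I(1) C(2) by (intro sets.finite_UN) auto
  have "measure M01 ?W = card I / n"
    using measure_M01_finite_Union[OF I(1) C(2,1)] C(3) by simp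
  then have "measure M01 (space M01 - ?W) = 1 - card I / n"
    using M01.finite_measure_compl[OF W] measure_M01_space by simp
  then have "real ?r \<le> n * measure M01 (space M01 - ?W)"
    using I(2,3) by (simp add: of_nat_diff field_simps)
  then obtain E where E: "disjoint_family_on E {..<?r}"
    "\<And>i. i < ?r \<Longrightarrow> E i \<in> sets M01 \<and> E i \<subseteq> space M01 - ?W \<and> measure M01 (E i) = 1 / n"
    using exists_disjoint_cells[of "space M01 - ?W" n ?r] W I(3) by auto
  have "disjoint_family_on (case_sum C E) (I <+> {..<?r})"
    using E(2) by (intro disjoint_family_on_case_sum[OF C(1) E(1)]) auto
  moreover have "case_sum C E j \<in> sets M01 \<and> measure M01 (case_sum C E j) = 1 / n"
    if "j \<in> I <+> {..<?r}" for j
    using that C(2,3) E(2) by auto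
  moreover have "card (I <+> {..<?r}) = n"
    using I by (simp add: card_Plus)
  ultimately show ?thesis
    unfolding equipartition_def using I(1,3) by (intro exI[of _ E]) simp
qed

lemma has_bochner_integral_step_function:
  assumes "\<And>j. j \<in> J \<Longrightarrow> B j \<in> sets M01"
  shows "has_bochner_integral M01 (step_function J c B) (\<Sum>j\<in>J. c j * measure M01 (B j))"
  unfolding step_function_def using assms
  by (intro has_bochner_integral_sum has_bochner_integral_mult_right has_bochner_integral_real_indicator)
     (auto simp: M01.emeasure_finite less_top[symmetric])

lemma exists_cells_in_level_sets:
  fixes n :: nat
  assumes V: "finite V" and D: "disjoint_family_on D V" "\<And>v. v \<in> V \<Longrightarrow> D v \<in> sets M01" and n: "0 < n"
  defines "I \<equiv> SIGMA v:V. {..<nat \<lfloor>n * measure M01 (D v)\<rfloor>}"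
  shows "\<exists>C. disjoint_family_on C I \<and>
           (\<forall>(v, i)\<in>I. C (v, i) \<in> sets M01 \<and> C (v, i) \<subseteq> D v \<and> measure M01 (C (v, i)) = 1 / n)"
proof -
  let ?p = "\<lambda>v. nat \<lfloor>n * measure M01 (D v)\<rfloor>"
  have "\<exists>Cv. disjoint_family_on Cv {..<?p v} \<and>
          (\<forall>i<?p v. Cv i \<in> sets M01 \<and> Cv i \<subseteq> D v \<and> measure M01 (Cv i) = 1 / n)" if "v \<in> V" for v
    using D(2)[OF that] n by (intro exists_disjoint_cells) auto
  then obtain C where C: "\<And>v. v \<in> V \<Longrightarrow> disjoint_family_on (C v) {..<?p v} \<and>
          (\<forall>i<?p v. C v i \<in> sets M01 \<and> C v i \<subseteq> D v \<and> measure M01 (C v i) = 1 / n)"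
    using bchoice[of V] by metis
  have disj: "C v i \<inter> C v' i' = {}" if "(v, i) \<in> I" "(v', i') \<in> I" "(v, i) \<noteq> (v', i')" for v i v' i'
  proof (cases "v = v'")
    case True
    then show ?thesis
      using C[of v] that unfolding I_def disjoint_family_on_def by auto
  next
    case False
    then have "D v \<inter> D v' = {}"
      using D(1) that unfolding I_def disjoint_family_on_def by auto
    then show ?thesis
      using C[of v] C[of v'] that unfolding I_def by blast
  qed
  have "disjoint_family_on (\<lambda>(v, i). C v i) I"
    unfolding disjoint_family_on_def
  proof (intro ballI impI)
    fix a b assume "a \<in> I" "b \<in> I" "a \<noteq> b"
    then show "(\<lambda>(v, i). C v i) a \<inter> (\<lambda>(v, i). C v i) b = {}"
      using disj[of "fst a" "snd a" "fst b" "snd b"] by (simp add: case_prod_beta)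
  qed
  moreover have "\<forall>(v, i)\<in>I. C v i \<in> sets M01 \<and> C v i \<subseteq> D v \<and> measure M01 (C v i) = 1 / n"
    using C unfolding I_def by auto
  ultimately show ?thesis
    by (intro exI[of _ "\<lambda>(v, i). C v i"]) simp
qed

lemma exists_equipartition_in_level_sets:
  fixes n :: nat
  assumes V: "finite V" and D: "disjoint_family_on D V" "\<And>v. v \<in> V \<Longrightarrow> D v \<in> sets M01" and n: "0 < n"
  defines "I \<equiv> SIGMA v:V. {..<nat \<lfloor>n * measure M01 (D v)\<rfloor>}"
  shows "\<exists>B. equipartition n (I <+> {..<n - card I}) B \<and> (\<forall>(v, i)\<in>I. B (Inl (v, i)) \<subseteq> D v)"
proof -
  obtain C where C: "disjoint_family_on C I"
    "\<forall>(v, i)\<in>I. C (v, i) \<in> sets M01 \<and> C (v, i) \<subseteq> D v \<and> measure M01 (C (v, i)) = 1 / n"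
    using exists_cells_in_level_sets[OF V D n] unfolding I_def by blast
  have "real (card I) = (\<Sum>v\<in>V. real (nat \<lfloor>n * measure M01 (D v)\<rfloor>))"
    using V by (simp add: I_def card_SigmaI)
  also have "\<dots> \<le> (\<Sum>v\<in>V. n * measure M01 (D v))"
    by (intro sum_mono) simp
  also have "\<dots> = n * measure M01 (\<Union>v\<in>V. D v)"
    using measure_M01_finite_Union[OF V D(2,1)] by (simp add: sum_distrib_left)
  also have "\<dots> \<le> n"
    using M01.bounded_measure[of "\<Union>v\<in>V. D v"] measure_M01_space by (simp add: mult_left_le)
  finally have "card I \<le> n"
    by simp
  then obtain E where "equipartition n (I <+> {..<n - card I}) (case_sum C E)"
    using equipartition_extend[of I n C] C n V unfolding I_def by auto
  then show ?thesis
    using C(2) by (intro exI[of _ "case_sum C E"]) auto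
qed

lemma level_sets_finite_range:
  fixes u :: "real \<Rightarrow> real"
  assumes u: "u \<in> borel_measurable M01" "finite (u ` space M01)"
    and D_def: "D = (\<lambda>v. {t \<in> space M01. u t = v})"
  shows "disjoint_family_on D (u ` space M01)" and "\<And>v. D v \<in> sets M01"
    and "(\<Union>v\<in>u ` space M01. D v) = space M01"
    and "\<And>t. t \<in> space M01 \<Longrightarrow> u t = step_function (u ` space M01) (\<lambda>v. v) D t"
proof -
  show "disjoint_family_on D (u ` space M01)" "(\<Union>v\<in>u ` space M01. D v) = space M01"
    unfolding D_def disjoint_family_on_def by auto
  show "D v \<in> sets M01" for v
  proof -
    have "D v = u -` {v} \<inter> space M01"
      unfolding D_def by auto
    then show ?thesis
      using measurable_sets[OF u(1), of "{v}"] by simp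
  qed
  show "u t = step_function (u ` space M01) (\<lambda>v. v) D t" if "t \<in> space M01" for t
    using step_function_cell[OF u(2) \<open>disjoint_family_on D (u ` space M01)\<close>, of "u t" t] that
    by (simp add: D_def)
qed

lemma has_bochner_integral_finite_range:
  fixes u :: "real \<Rightarrow> real"
  assumes u: "u \<in> borel_measurable M01" "finite (u ` space M01)"
  shows "has_bochner_integral M01 u (\<Sum>v\<in>u ` space M01. v * measure M01 {t \<in> space M01. u t = v})"
proof -
  note D = level_sets_finite_range[OF u refl]
  have "has_bochner_integral M01 u (\<Sum>v\<in>u ` space M01. v * measure M01 {t \<in> space M01. u t = v})
    \<longleftrightarrow> has_bochner_integral M01 (step_function (u ` space M01) (\<lambda>v. v) (\<lambda>v. {t \<in> space M01. u t = v}))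
          (\<Sum>v\<in>u ` space M01. v * measure M01 {t \<in> space M01. u t = v})"
    by (intro has_bochner_integral_cong) (simp_all add: D(4))
  then show ?thesis
    using has_bochner_integral_step_function[OF D(2)] by simp
qed

text \<open>The step function packs cells of measure \<open>1/n\<close> into each level set of \<open>u\<close>, with the level as
  weight; a level set loses less than one cell, and the filler cells get weight 0.\<close>

lemma exists_equipartition_below:
  fixes u :: "real \<Rightarrow> real" and n :: nat
  assumes u: "u \<in> borel_measurable M01" "finite (u ` space M01)" "\<And>t. t \<in> space M01 \<Longrightarrow> 0 \<le> u t"
    and n: "0 < n"
  shows "\<exists>(J :: ((real \<times> nat) + nat) set) B w. equipartition n J B \<and> (\<forall>j\<in>J. 0 \<le> w j) \<and>
           (\<forall>t\<in>space M01. step_function J w B t \<le> u t) \<and>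
           n * integral\<^sup>L M01 u - (\<Sum>v\<in>u ` space M01. v) \<le> (\<Sum>j\<in>J. w j)"
proof -
  define V where "V = u ` space M01"
  define D where "D = (\<lambda>v. {t \<in> space M01. u t = v})"
  define p where "p v = nat \<lfloor>n * measure M01 (D v)\<rfloor>" for v
  define I where "I = (SIGMA v:V. {..<p v})"
  note D = level_sets_finite_range[OF u(1,2) D_def, folded V_def]
  have V: "finite V" "\<And>v. v \<in> V \<Longrightarrow> 0 \<le> v"
    using u(2,3) by (auto simp: V_def)
  obtain B where B: "equipartition n (I <+> {..<n - card I}) B" "\<And>v i. (v, i) \<in> I \<Longrightarrow> B (Inl (v, i)) \<subseteq> D v"
    using exists_equipartition_in_level_sets[OF V(1) D(1,2) n] unfolding I_def p_def by blast
  define w :: "(real \<times> nat) + nat \<Rightarrow> real" where "w = case_sum (\<lambda>(v, i). v) (\<lambda>_. 0)"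
  let ?J = "I <+> {..<n - card I}"
  have w_le: "w j \<le> u t" if j: "j \<in> ?J" "t \<in> B j" and t: "t \<in> space M01" for j t
  proof (cases j)
    case (Inl x)
    moreover obtain v i where "x = (v, i)"
      by fastforce
    ultimately show ?thesis
      using j B(2)[of v i] by (auto simp: w_def D_def)
  qed (simp add: w_def u(3)[OF t])
  have "step_function ?J w B t \<le> u t" if t: "t \<in> space M01" for t
  proof (rule step_function_le)
    show "finite ?J" "disjoint_family_on B ?J"
      using B(1) unfolding equipartition_def by auto
  qed (use w_le[OF _ _ t] u(3)[OF t] in auto)
  moreover have "n * integral\<^sup>L M01 u - (\<Sum>v\<in>V. v) \<le> (\<Sum>j\<in>?J. w j)"
  proof -
    have "n * integral\<^sup>L M01 u - (\<Sum>v\<in>V. v) = (\<Sum>v\<in>V. (n * measure M01 (D v) - 1) * v)"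
      using has_bochner_integral_integral_eq[OF has_bochner_integral_finite_range[OF u(1,2)]]
      by (simp add: V_def D_def sum_distrib_left sum_subtractf algebra_simps)
    also have "\<dots> \<le> (\<Sum>v\<in>V. real (p v) * v)"
      using V(2) by (intro sum_mono mult_right_mono) (auto simp: p_def)
    also have "\<dots> = (\<Sum>(v, i)\<in>I. v)"
      unfolding I_def using V(1) by (subst sum.Sigma[symmetric]) auto
    also have "\<dots> = (\<Sum>j\<in>?J. w j)"
      using V(1) by (simp add: I_def w_def sum.Plus)
    finally show ?thesis .
  qed
  moreover have "0 \<le> w j" if "j \<in> ?J" for j
    using that V(2) by (auto simp: w_def I_def)
  ultimately show ?thesis
    using B(1) unfolding V_def by blast
qed

lemma integral_M01_const: "integral\<^sup>L M01 (\<lambda>_. c) = (c::real)"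
proof -
  have "integral\<^sup>L M01 (\<lambda>_. c) = measure M01 (space M01) *\<^sub>R c"
    by (rule Bochner_Integration.lebesgue_integral_const)
  then show ?thesis
    using measure_M01_space by simp
qed

section \<open>Symmetric spaces embed contractively into \<open>L\<^sup>1\<close>\<close>

lemma symmetric_spaceD:
  assumes "symmetric_space X N"
  shows "X \<subseteq> borel_measurable M01"
    and "(\<lambda>_. 0) \<in> X"
    and "\<forall>x\<in>X. \<forall>y\<in>X. (\<lambda>t. x t + y t) \<in> X"
    and "\<forall>x\<in>X. \<forall>c::real. (\<lambda>t. c * x t) \<in> X"
    and "\<forall>x\<in>X. N x \<ge> 0"
    and "\<forall>x\<in>X. \<forall>c::real. N (\<lambda>t. c * x t) = \<bar>c\<bar> * N x"
    and "\<forall>x\<in>X. \<forall>y\<in>X. N (\<lambda>t. x t + y t) \<le> N x + N y"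
    and "\<forall>x y. y \<in> X \<and> x \<in> borel_measurable M01 \<and> (AE t in M01. \<bar>x t\<bar> \<le> \<bar>y t\<bar>)
           \<longrightarrow> x \<in> X \<and> N x \<le> N y"
    and "\<forall>x y. y \<in> X \<and> x \<in> borel_measurable M01 \<and> equimeasurable x y \<longrightarrow> x \<in> X \<and> N x = N y"
    and "(\<lambda>_. 1) \<in> X" and "N (\<lambda>_. 1) = 1"
proof -
  note S = assms[unfolded symmetric_space_def]
  from S show "X \<subseteq> borel_measurable M01" by (elim conjE)
  from S show "(\<lambda>_. 0) \<in> X" by (elim conjE)
  from S show "\<forall>x\<in>X. \<forall>y\<in>X. (\<lambda>t. x t + y t) \<in> X" by (elim conjE)
  from S show "\<forall>x\<in>X. \<forall>c::real. (\<lambda>t. c * x t) \<in> X" by (elim conjE)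
  from S show "\<forall>x\<in>X. N x \<ge> 0" by (elim conjE)
  from S show "\<forall>x\<in>X. \<forall>c::real. N (\<lambda>t. c * x t) = \<bar>c\<bar> * N x" by (elim conjE)
  from S show "\<forall>x\<in>X. \<forall>y\<in>X. N (\<lambda>t. x t + y t) \<le> N x + N y" by (elim conjE)
  from S show "\<forall>x y. y \<in> X \<and> x \<in> borel_measurable M01 \<and> (AE t in M01. \<bar>x t\<bar> \<le> \<bar>y t\<bar>)
           \<longrightarrow> x \<in> X \<and> N x \<le> N y" by (elim conjE)
  from S show "\<forall>x y. y \<in> X \<and> x \<in> borel_measurable M01 \<and> equimeasurable x y \<longrightarrow> x \<in> X \<and> N x = N y"
    by (elim conjE)
  from S show "(\<lambda>_. 1) \<in> X" by (elim conjE)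
  from S show "N (\<lambda>_. 1) = 1" by (elim conjE)
qed

definition norming_functional ::
    "(real \<Rightarrow> real) set \<Rightarrow> ((real \<Rightarrow> real) \<Rightarrow> real) \<Rightarrow> (real \<Rightarrow> real) \<Rightarrow> ((real \<Rightarrow> real) \<Rightarrow> real) \<Rightarrow> bool"
  where "norming_functional X N x0 \<phi> \<longleftrightarrow> bounded_functional X N \<phi> \<and> dual_norm X N \<phi> = 1 \<and> \<phi> x0 = 1"

lemma smooth_at_iff_norming_functional:
  "smooth_at X N x0 \<longleftrightarrow> x0 \<in> X \<and> N x0 = 1 \<and> (\<exists>\<phi>. norming_functional X N x0 \<phi>) \<and>
     (\<forall>\<phi> \<psi>. norming_functional X N x0 \<phi> \<and> norming_functional X N x0 \<psi> \<longrightarrow> (\<forall>x\<in>X. \<phi> x = \<psi> x))"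
  unfolding smooth_at_def norming_functional_def by (simp only: conj_assoc)

locale symmetric_function_space =
  fixes X :: "(real \<Rightarrow> real) set" and N :: "(real \<Rightarrow> real) \<Rightarrow> real"
  assumes symmetric_space: "symmetric_space X N"

sublocale symmetric_function_space \<subseteq> seminormed_function_space X N
  by (unfold_locales; insert symmetric_spaceD(2-7)[OF symmetric_space]; blast)

context symmetric_function_space
begin

lemma mem_measurable: "x \<in> X \<Longrightarrow> x \<in> borel_measurable M01"
  using symmetric_spaceD(1)[OF symmetric_space] by blast

lemma ideal:
  "y \<in> X \<Longrightarrow> x \<in> borel_measurable M01 \<Longrightarrow> (AE t in M01. \<bar>x t\<bar> \<le> \<bar>y t\<bar>) \<Longrightarrow> x \<in> X \<and> N x \<le> N y"
  using symmetric_spaceD(8)[OF symmetric_space] by blast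

lemma rearrangement_invariant:
  "y \<in> X \<Longrightarrow> x \<in> borel_measurable M01 \<Longrightarrow> equimeasurable x y \<Longrightarrow> x \<in> X \<and> N x = N y"
  using symmetric_spaceD(9)[OF symmetric_space] by blast

lemma one_mem: "(\<lambda>_. 1) \<in> X" and norm_one: "N (\<lambda>_. 1) = 1"
  using symmetric_spaceD(10,11)[OF symmetric_space] by simp_all

lemma norm_const: "N (\<lambda>_. c) = \<bar>c\<bar>"
  using norm_scale[OF one_mem, of c] norm_one by simp

lemma mem_norm_cong_AE:
  assumes "x \<in> X" "y \<in> borel_measurable M01" "AE t in M01. x t = y t"
  shows "y \<in> X \<and> N y = N x"
proof -
  have "AE t in M01. \<bar>y t\<bar> \<le> \<bar>x t\<bar>" "AE t in M01. \<bar>x t\<bar> \<le> \<bar>y t\<bar>"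
    using assms(3) by (auto elim: AE_mp)
  then show ?thesis
    using ideal[OF assms(1,2)] ideal[of y x] mem_measurable[OF assms(1)] by fastforce
qed

lemma abs_sum_le_norm_step_function:
  assumes B: "equipartition n J B" and s: "step_function J c B \<in> X"
  shows "\<bar>\<Sum>j\<in>J. c j\<bar> \<le> n * N (step_function J c B)"
proof -
  have J: "finite J" "card J = n" "disjoint_family_on B J" "\<And>j. j \<in> J \<Longrightarrow> B j \<in> sets M01"
    using B unfolding equipartition_def by auto
  obtain \<pi> where \<pi>: "\<And>k. bij_betw (\<pi> k) J J" "\<And>j. j \<in> J \<Longrightarrow> bij_betw (\<lambda>k. \<pi> k j) {..<n} J"
    using exists_cyclic_permutations[OF J(1)] J(2) by blast
  define s where "s k = step_function J (\<lambda>j. c (\<pi> k j)) B" for k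
  have s_mem: "s k \<in> X \<and> N (s k) = N (step_function J c B)" for k
    unfolding s_def
    using equimeasurable_step_function_permute[OF B \<pi>(1)] measurable_step_function[OF J(4)]
    by (intro rearrangement_invariant[OF s])
  have sum_s: "(\<lambda>t. \<Sum>k<n. s k t) \<in> X \<and> N (\<lambda>t. \<Sum>k<n. s k t) \<le> n * N (step_function J c B)"
    using sum_mem_norm_sum_le[of "{..<n}" s] s_mem by simp
  have "AE t in M01. (\<Sum>k<n. s k t) = (\<Sum>j\<in>J. c j)"
    using equipartition_AE_cover[OF B]
  proof eventually_elim
    case (elim t)
    then obtain i where i: "i \<in> J" "t \<in> B i" by blast
    have "(\<Sum>k<n. s k t) = (\<Sum>k<n. c (\<pi> k i))"
      unfolding s_def using step_function_cell[OF J(1,3) i] by simp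
    also have "\<dots> = (\<Sum>j\<in>J. c j)"
      by (rule sum.reindex_bij_betw[OF \<pi>(2)[OF i(1)]])
    finally show ?case .
  qed
  then have "N (\<lambda>_. \<Sum>j\<in>J. c j) = N (\<lambda>t. \<Sum>k<n. s k t)"
    using mem_norm_cong_AE[OF conjunct1[OF sum_s]] by simp
  then show ?thesis
    using sum_s norm_const by simp
qed

lemma integral_le_norm_of_finite_range:
  assumes u: "u \<in> X" "finite (u ` space M01)" "\<And>t. t \<in> space M01 \<Longrightarrow> 0 \<le> u t"
  shows "integral\<^sup>L M01 u \<le> N u"
proof -
  let ?S = "\<Sum>v\<in>u ` space M01. v"
  have bound: "integral\<^sup>L M01 u \<le> N u + ?S / n" if n: "0 < n" for n :: nat
  proof -
    obtain J :: "((real \<times> nat) + nat) set" and B w where B: "equipartition n J B"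
      and w: "\<forall>j\<in>J. 0 \<le> w j" and below: "\<forall>t\<in>space M01. step_function J w B t \<le> u t"
      and sum_w: "n * integral\<^sup>L M01 u - ?S \<le> (\<Sum>j\<in>J. w j)"
      using exists_equipartition_below[OF mem_measurable[OF u(1)] u(2,3) n] by blast
    have "0 \<le> step_function J w B t" for t
      unfolding step_function_def using w by (intro sum_nonneg) auto
    then have "AE t in M01. \<bar>step_function J w B t\<bar> \<le> \<bar>u t\<bar>"
      using below u(3) by (intro AE_I2) (simp add: abs_of_nonneg)
    then have s: "step_function J w B \<in> X \<and> N (step_function J w B) \<le> N u"
      using B unfolding equipartition_def by (intro ideal[OF u(1)] measurable_step_function) auto
    have "(\<Sum>j\<in>J. w j) \<le> n * N (step_function J w B)"
      using abs_sum_le_norm_step_function[OF B conjunct1[OF s]] by linarith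
    also have "\<dots> \<le> n * N u"
      using s by (simp add: mult_left_mono)
    finally have "n * integral\<^sup>L M01 u \<le> n * N u + ?S"
      using sum_w by linarith
    then show ?thesis
      using n by (simp add: field_simps)
  qed
  have "(\<lambda>m. N u + ?S / real (Suc m)) \<longlonglongrightarrow> N u + 0"
    by (intro tendsto_add tendsto_const LIMSEQ_Suc[OF lim_const_over_n])
  moreover have "\<forall>m\<ge>0. integral\<^sup>L M01 u \<le> N u + ?S / real (Suc m)"
    using bound zero_less_Suc by blast
  ultimately show ?thesis
    by (intro LIMSEQ_le_const) auto
qed

lemma nn_integral_le_norm:
  assumes x: "x \<in> X" "\<And>t. 0 \<le> x t"
  shows "(\<integral>\<^sup>+ t. ennreal (x t) \<partial>M01) \<le> ennreal (N x)"
  unfolding nn_integral_def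
proof (rule SUP_least)
  fix g assume "g \<in> {g. simple_function M01 g \<and> g \<le> (\<lambda>t. ennreal (x t))}"
  then have g: "simple_function M01 g" "\<And>t. g t \<le> ennreal (x t)"
    by (auto simp: le_fun_def)
  define u where "u t = enn2real (g t)" for t
  have g_eq: "g t = ennreal (u t)" for t
  proof -
    have "g t < top"
      using g(2)[of t] by (rule le_less_trans) simp
    then show ?thesis
      by (simp add: u_def)
  qed
  have u_meas: "u \<in> borel_measurable M01"
    unfolding u_def using borel_measurable_simple_function[OF g(1)] by simp
  have "u ` space M01 = enn2real ` g ` space M01"
    by (auto simp: u_def)
  then have u_fin: "finite (u ` space M01)"
    using simple_functionD(1)[OF g(1)] by simp
  have "0 \<le> u t" "u t \<le> x t" for t
    using g(2)[of t] x(2)[of t] unfolding g_eq by (simp_all add: u_def)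
  then have "\<bar>u t\<bar> \<le> \<bar>x t\<bar>" for t
    by (metis abs_of_nonneg order_trans)
  then have u: "u \<in> X \<and> N u \<le> N x"
    using u_meas by (intro ideal[OF x(1)] AE_I2)
  have "integral\<^sup>S M01 g = integral\<^sup>N M01 g"
    by (rule nn_integral_eq_simple_integral[OF g(1), symmetric])
  also have "\<dots> = (\<integral>\<^sup>+ t. ennreal (u t) \<partial>M01)"
    using g_eq by (intro nn_integral_cong) simp
  also have "\<dots> = ennreal (integral\<^sup>L M01 u)"
    using integrable.intros[OF has_bochner_integral_finite_range[OF u_meas u_fin]]
    by (rule nn_integral_eq_integral) (simp add: u_def)
  also have "\<dots> \<le> ennreal (N x)"
    using integral_le_norm_of_finite_range[OF conjunct1[OF u] u_fin] u
    by (intro ennreal_leI) (auto simp: u_def)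
  finally show "integral\<^sup>S M01 g \<le> ennreal (N x)" .
qed

lemma integrable_and_abs_integral_le_norm:
  assumes x: "x \<in> X"
  shows "integrable M01 x" and "\<bar>integral\<^sup>L M01 x\<bar> \<le> N x"
proof -
  have x_meas: "x \<in> borel_measurable M01"
    by (rule mem_measurable[OF x])
  have "(\<lambda>t. \<bar>x t\<bar>) \<in> X \<and> N (\<lambda>t. \<bar>x t\<bar>) \<le> N x"
    using x_meas by (intro ideal[OF x]) auto
  moreover have "N x \<le> N (\<lambda>t. \<bar>x t\<bar>)"
    using ideal[OF conjunct1[OF calculation] x_meas] by simp
  ultimately have abs_x: "(\<lambda>t. \<bar>x t\<bar>) \<in> X" "N (\<lambda>t. \<bar>x t\<bar>) = N x"
    by auto
  have nn: "(\<integral>\<^sup>+ t. ennreal \<bar>x t\<bar> \<partial>M01) \<le> ennreal (N x)"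
    using nn_integral_le_norm[OF abs_x(1)] abs_x(2) by simp
  then have "integrable M01 (\<lambda>t. \<bar>x t\<bar>)"
    using x_meas by (intro integrableI_nonneg) (auto intro: le_less_trans)
  then show "integrable M01 x"
    using integrable_abs_iff[OF x_meas] by simp
  have "\<bar>integral\<^sup>L M01 x\<bar> \<le> integral\<^sup>L M01 (\<lambda>t. \<bar>x t\<bar>)"
    by (rule integral_abs_bound)
  also have "\<dots> = enn2real (\<integral>\<^sup>+ t. ennreal \<bar>x t\<bar> \<partial>M01)"
    using x_meas by (intro integral_eq_nn_integral) auto
  also have "\<dots> \<le> N x"
    using nn norm_nonneg[OF x] by (simp add: enn2real_leI)
  finally show "\<bar>integral\<^sup>L M01 x\<bar> \<le> N x" .
qed

lemma bounded_functional_iff: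
  "bounded_functional X N \<phi> \<longleftrightarrow> linear_functional \<phi> \<and> (\<exists>C. \<forall>x\<in>X. \<bar>\<phi> x\<bar> \<le> C * N x)"
  unfolding bounded_functional_def linear_functional_def by (simp only: conj_assoc)

lemma bdd_above_unit_ball_image:
  assumes "bounded_functional X N \<phi>"
  shows "bdd_above {\<bar>\<phi> y\<bar> | y. y \<in> X \<and> N y \<le> 1}"
proof -
  obtain C where C: "\<And>y. y \<in> X \<Longrightarrow> \<bar>\<phi> y\<bar> \<le> C * N y"
    using assms unfolding bounded_functional_iff by blast
  show ?thesis
  proof (rule bdd_aboveI[where M = "max C 0"])
    fix a assume "a \<in> {\<bar>\<phi> y\<bar> | y. y \<in> X \<and> N y \<le> 1}"
    then obtain y where y: "a = \<bar>\<phi> y\<bar>" "y \<in> X" "N y \<le> 1"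
      by blast
    have "\<bar>\<phi> y\<bar> \<le> max C 0 * N y"
      using C[OF y(2)] mult_right_mono[OF max.cobounded1 norm_nonneg[OF y(2)]] by (rule order_trans)
    also have "\<dots> \<le> max C 0"
      using y(3) norm_nonneg[OF y(2)] by (intro mult_left_le) auto
    finally show "a \<le> max C 0"
      using y(1) by simp
  qed
qed

lemma abs_le_dual_norm:
  assumes \<phi>: "bounded_functional X N \<phi>" and x: "x \<in> X"
  shows "\<bar>\<phi> x\<bar> \<le> dual_norm X N \<phi> * N x"
proof (cases "N x = 0")
  case True
  obtain C where "\<And>y. y \<in> X \<Longrightarrow> \<bar>\<phi> y\<bar> \<le> C * N y"
    using \<phi> unfolding bounded_functional_iff by blast
  from this[OF x] True show ?thesis
    by simp
next
  case False
  then have Nx: "0 < N x"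
    using norm_nonneg[OF x] by simp
  define z where "z = (\<lambda>t. (1 / N x) * x t)"
  have "\<phi> z = (1 / N x) * \<phi> x"
    using \<phi> x unfolding z_def bounded_functional_iff linear_functional_def by blast
  moreover have "z \<in> X" "N z = 1"
    using scale_mem[OF x, of "1 / N x"] norm_scale[OF x, of "1 / N x"] Nx by (simp_all add: z_def)
  then have "\<bar>\<phi> z\<bar> \<in> {\<bar>\<phi> y\<bar> | y. y \<in> X \<and> N y \<le> 1}"
    by auto
  then have "\<bar>\<phi> z\<bar> \<le> dual_norm X N \<phi>"
    unfolding dual_norm_def by (rule cSup_upper[OF _ bdd_above_unit_ball_image[OF \<phi>]])
  ultimately show ?thesis
    using Nx by (simp add: abs_div divide_le_eq)
qed

lemma norming_functional_one_iff:
  "norming_functional X N (\<lambda>_. 1) \<phi> \<longleftrightarrow>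
     linear_functional \<phi> \<and> (\<forall>x\<in>X. \<bar>\<phi> x\<bar> \<le> N x) \<and> \<phi> (\<lambda>_. 1) = 1"
proof
  assume "norming_functional X N (\<lambda>_. 1) \<phi>"
  then have \<phi>: "bounded_functional X N \<phi>" "dual_norm X N \<phi> = 1" "\<phi> (\<lambda>_. 1) = 1"
    unfolding norming_functional_def by simp_all
  then show "linear_functional \<phi> \<and> (\<forall>x\<in>X. \<bar>\<phi> x\<bar> \<le> N x) \<and> \<phi> (\<lambda>_. 1) = 1"
    using abs_le_dual_norm[OF \<phi>(1)] unfolding bounded_functional_iff by simp
next
  assume \<phi>: "linear_functional \<phi> \<and> (\<forall>x\<in>X. \<bar>\<phi> x\<bar> \<le> N x) \<and> \<phi> (\<lambda>_. 1) = 1"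
  have "dual_norm X N \<phi> = 1"
    unfolding dual_norm_def
  proof (rule cSup_eq_maximum)
    show "1 \<in> {\<bar>\<phi> x\<bar> | x. x \<in> X \<and> N x \<le> 1}"
      using \<phi> one_mem norm_one by (intro CollectI exI[of _ "\<lambda>_. 1"]) simp
    fix a assume "a \<in> {\<bar>\<phi> x\<bar> | x. x \<in> X \<and> N x \<le> 1}"
    then obtain y where "a = \<bar>\<phi> y\<bar>" "y \<in> X" "N y \<le> 1"
      by blast
    then show "a \<le> 1"
      using \<phi> by fastforce
  qed
  moreover have "\<forall>x\<in>X. \<bar>\<phi> x\<bar> \<le> 1 * N x"
    using \<phi> by simp
  ultimately show "norming_functional X N (\<lambda>_. 1) \<phi>"
    using \<phi> unfolding norming_functional_def bounded_functional_iff by blast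
qed

lemma integral_norming_functional: "norming_functional X N (\<lambda>_. 1) (integral\<^sup>L M01)"
  unfolding norming_functional_one_iff linear_functional_def
proof (intro conjI ballI allI)
  fix x y assume "x \<in> X" "y \<in> X"
  then show "integral\<^sup>L M01 (\<lambda>t. x t + y t) = integral\<^sup>L M01 x + integral\<^sup>L M01 y"
    by (intro Bochner_Integration.integral_add integrable_and_abs_integral_le_norm(1))
next
  show "integral\<^sup>L M01 (\<lambda>_. 1) = (1::real)"
    by (rule integral_M01_const)
qed (simp_all add: integrable_and_abs_integral_le_norm(2))

lemma norming_functional_eq_integral:
  assumes approx: "\<forall>f\<in>X. integral\<^sup>L M01 f \<noteq> 0 \<longrightarrow> (\<exists>c0. N (\<lambda>t. 1 - c0 * f t) < 1)"
    and \<phi>: "norming_functional X N (\<lambda>_. 1) \<phi>" and x: "x \<in> X"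
  shows "\<phi> x = integral\<^sup>L M01 x"
proof -
  have lin: "linear_functional \<phi>" and bound: "\<And>y. y \<in> X \<Longrightarrow> \<bar>\<phi> y\<bar> \<le> N y" and one: "\<phi> (\<lambda>_. 1) = 1"
    using \<phi> unfolding norming_functional_one_iff by auto
  define g where "g t = x t + (- \<phi> x) * 1" for t
  have g: "g \<in> X" "\<phi> g = 0"
    unfolding g_def
    using add_scale_mem[OF x one_mem, of "- \<phi> x"] linear_functional_add_scale[OF lin x one_mem, of "- \<phi> x"] one
    by simp_all
  have "integral\<^sup>L M01 g = 0"
  proof (rule ccontr)
    assume "integral\<^sup>L M01 g \<noteq> 0"
    then obtain c0 where c0: "N (\<lambda>t. 1 - c0 * g t) < 1"
      using approx g(1) by blast
    have "\<phi> (\<lambda>t. 1 + (- c0) * g t) = 1"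
      using linear_functional_add_scale[OF lin one_mem g(1), of "- c0"] g(2) one by simp
    then show False
      using bound[OF add_scale_mem[OF one_mem g(1), of "- c0"]] c0 by simp
  qed
  moreover have "integral\<^sup>L M01 g = integral\<^sup>L M01 x - \<phi> x"
    unfolding g_def using integrable_and_abs_integral_le_norm(1)[OF x] measure_M01_space by simp
  ultimately show ?thesis
    by simp
qed

lemma smooth_at_one_if_dist_lt_one:
  assumes "\<forall>f\<in>X. integral\<^sup>L M01 f \<noteq> 0 \<longrightarrow> (\<exists>c0. N (\<lambda>t. 1 - c0 * f t) < 1)"
  shows "smooth_at X N (\<lambda>_. 1)"
  unfolding smooth_at_iff_norming_functional
  using one_mem norm_one integral_norming_functional norming_functional_eq_integral[OF assms]
  by metis

lemma dist_lt_one_if_smooth_at_one: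
  assumes smooth: "smooth_at X N (\<lambda>_. 1)" and f: "f \<in> X" "integral\<^sup>L M01 f \<noteq> 0"
    and D: "countable D" "D \<subseteq> X" "\<And>x \<epsilon>. x \<in> X \<Longrightarrow> 0 < \<epsilon> \<Longrightarrow> \<exists>d\<in>D. N (\<lambda>t. x t - d t) < \<epsilon>"
  shows "\<exists>c0. N (\<lambda>t. 1 - c0 * f t) < 1"
proof (rule ccontr)
  assume far: "\<nexists>c0. N (\<lambda>t. 1 - c0 * f t) < 1"
  have "N (\<lambda>_. 1) \<le> N (\<lambda>t. 1 + s * f t)" for s
  proof -
    have "\<not> N (\<lambda>t. 1 - (- s) * f t) < 1"
      using far by blast
    then show ?thesis
      using norm_one by simp
  qed
  then obtain q where "linear_functional q" "\<forall>x\<in>X. \<bar>q x\<bar> \<le> N x" "q (\<lambda>_. 1) = N (\<lambda>_. 1)" "q f = 0"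
    using exists_functional_vanishing[OF one_mem f(1) _ D] by blast
  then have "norming_functional X N (\<lambda>_. 1) q"
    unfolding norming_functional_one_iff using norm_one by simp
  then have "q f = integral\<^sup>L M01 f"
    using smooth integral_norming_functional f(1) unfolding smooth_at_iff_norming_functional by blast
  with \<open>q f = 0\<close> f(2) show False
    by simp
qed

end

theorem proposition4:
  fixes X :: "(real \<Rightarrow> real) set" and N :: "(real \<Rightarrow> real) \<Rightarrow> real"
  assumes "symmetric_space X N" and "separable_space X N"
  shows "(\<forall>f\<in>X. integral\<^sup>L M01 f \<noteq> 0 \<longrightarrow> (\<exists>c0::real. N (\<lambda>t. 1 - c0 * f t) < 1))
         \<longleftrightarrow> smooth_at X N (\<lambda>_. 1)"
proof -
  interpret symmetric_function_space X N
    by (rule symmetric_function_space.intro) (rule assms(1))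
  obtain D where "countable D" "D \<subseteq> X" "\<And>x \<epsilon>. x \<in> X \<Longrightarrow> 0 < \<epsilon> \<Longrightarrow> \<exists>d\<in>D. N (\<lambda>t. x t - d t) < \<epsilon>"
    using assms(2) unfolding separable_space_def by blast
  then show ?thesis
    using smooth_at_one_if_dist_lt_one dist_lt_one_if_smooth_at_one by blast
qed

end
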